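(* Let $A\in\mathbb{R}^{n\times n}$ and $H\in\mathbb{R}^{n\times n}$ be symmetric positive definite, let $Z\in\mathbb{R}^{n\times r}$ with $r<n$ have full column rank, let $P=I-AZ(Z^TAZ)^{-1}Z^T$, let $\bm b\in\mathbb{R}^n$ with $P\bm b\neq \bm 0$, and let $\bm x = A^{-1}\bm b$. For arbitrary vectors $\tilde{\bm x}_j\in\mathbb{R}^n$ define $$\bm{x}_j = P^T\tilde{\bm{x}}_j + Z(Z^TAZ)^{-1}Z^T\bm{b},\qquad \bm r_j = \bm b - A\bm x_j.$$ Then $$\frac{\|\bm{x}-\bm{x}_j\|_{PA}}{\|\bm{x}\|_{PA}} \le \sqrt{\kappa_{\mathrm{eff}}(H^{-1}PA)}\,\frac{\|\bm{r}_j\|_{H^{-1}}}{\|P\bm{b}\|_{H^{-1}}}.$$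
   Context: $PA$ is symmetric positive semidefinite with kernel equal to the range of $Z$ (dimension $r$). For a symmetric positive semidefinite matrix $B$, $\|\bm v\|_B=\sqrt{\bm v^TB\bm v}$. The matrix $H^{-1}PA$ is similar to the symmetric positive semidefinite matrix $L^{-1}PAL^{-T}$, where $H=LL^T$ is the Cholesky factorization, so its eigenvalues are real and nonnegative; ordering them $\lambda_1\le\dots\le\lambda_n$, exactly $r$ are zero, and $\kappa_{\mathrm{eff}}(H^{-1}PA)=\lambda_n(H^{-1}PA)/\lambda_{r+1}(H^{-1}PA)$. *)

theory Defs
  imports "HOL-Analysis.Analysis" "HOL-Computational_Algebra.Polynomial"
begin

definition spd :: "real^'n^'n \<Rightarrow> bool" where
  "spd M \<longleftrightarrow> transpose M = M \<and> (\<forall>v. v \<noteq> 0 \<longrightarrow> v \<bullet> (M *v v) > 0)"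

definition bnorm :: "real^'n^'n \<Rightarrow> real^'n \<Rightarrow> real" where
  "bnorm B v = sqrt (v \<bullet> (B *v v))"

definition charpoly :: "real^'n^'n \<Rightarrow> real poly" where
  "charpoly M = det (\<chi> i j. (if i = j then [:0, 1:] else 0) - [:M $ i $ j:])"

text \<open>Eigenvalues (with multiplicity) in increasing order
  lambda_1 \<le> ... \<le> lambda_n, for a matrix whose eigenvalues are all real.\<close>
definition sorted_eigs :: "real^'n^'n \<Rightarrow> real list" where
  "sorted_eigs M = (THE ls. sorted ls \<and> length ls = CARD('n) \<and>
      charpoly M = (\<Prod>l\<leftarrow>ls. [:- l, 1:]))"

text \<open>Effective condition number lambda_n / lambda_{r+1} (0-based index r).\<close>
definition kappa_eff :: "nat \<Rightarrow> real^'n^'n \<Rightarrow> real" where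
  "kappa_eff r M = last (sorted_eigs M) / (sorted_eigs M ! r)"

end

theory Submission
  imports Defs
begin

(* Write M = P A. It is symmetric positive semidefinite with kernel range Z, and
   M x = P b, M (x - x_j) = r_j. The claim therefore follows from the two bounds
     lambda_(r+1) v^T M v <= (M v)^T H^-1 (M v) <= lambda_n v^T M v,
   used with v = x - x_j and v = x respectively. They come from a simultaneous
   diagonalisation U^T H U = I, M U = H U diag mu, built by repeatedly maximising the
   Rayleigh quotient v^T M v / v^T H v on H-orthogonal complements. By similarity the mu_i
   are the eigenvalues of H^-1 M, exactly r of them vanish, and in coordinates v = U c
   the two forms are sum mu_i c_i^2 and sum mu_i^2 c_i^2, while every nonzero mu_i lies
   between lambda_(r+1) and lambda_n. *)

lemma matrix_mul_diff_left: "(A::'a::ring_1^'n^'m) ** (B - C) = A ** B - A ** C"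
  by (simp add: matrix_matrix_mult_def vec_eq_iff sum_subtractf algebra_simps)

lemma matrix_mul_diff_right: "((B::'a::ring_1^'n^'m) - C) ** A = B ** A - C ** A"
  by (simp add: matrix_matrix_mult_def vec_eq_iff sum_subtractf algebra_simps)

lemma transpose_diff: "transpose (A - B) = transpose A - transpose (B::'a::ring_1^'n^'m)"
  by (simp add: transpose_def vec_eq_iff)

lemma inner_matrix_vector_transpose: "(A *v x) \<bullet> y = x \<bullet> (transpose A *v (y::real^'m))"
  using dot_lmul_matrix[of x "transpose A" y] by simp

lemma inner_matrix_symmetric:
  fixes B :: "real^'n^'n"
  assumes "transpose B = B"
  shows "x \<bullet> (B *v y) = (B *v x) \<bullet> y"
  using inner_matrix_vector_transpose[of B x y] assms by simp

lemma
  assumes "invertible A"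
  shows matrix_inv_right: "A ** matrix_inv A = mat 1"
    and matrix_inv_left: "matrix_inv A ** A = mat 1"
  using someI_ex[OF assms[unfolded invertible_def]] unfolding matrix_inv_def by auto

lemma invertible_if_kernel_trivial:
  fixes A :: "real^'n^'n"
  assumes "\<And>v. A *v v = 0 \<Longrightarrow> v = 0"
  shows "invertible A"
proof -
  have "inj ((*v) A)"
  proof (rule injI)
    fix x y assume "A *v x = A *v y"
    then have "A *v (x - y) = 0" by (simp add: matrix_vector_mult_diff_distrib)
    then show "x = y" using assms by fastforce
  qed
  then show ?thesis
    using matrix_left_invertible_injective invertible_left_inverse by blast
qed

lemma symmetric_matrix_inv:
  fixes A :: "real^'n^'n"
  assumes "transpose A = A" "invertible A"
  shows "transpose (matrix_inv A) = matrix_inv A"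
proof -
  have "transpose (matrix_inv A) ** A = mat 1"
    using arg_cong[OF matrix_inv_right[OF assms(2)], of transpose]
    by (simp add: matrix_transpose_mul assms(1))
  have "transpose (matrix_inv A) = transpose (matrix_inv A) ** (A ** matrix_inv A)"
    by (simp add: matrix_inv_right[OF assms(2)])
  also have "\<dots> = (transpose (matrix_inv A) ** A) ** matrix_inv A"
    by (rule matrix_mul_assoc)
  also have "\<dots> = matrix_inv A"
    using \<open>transpose (matrix_inv A) ** A = mat 1\<close> by simp
  finally show ?thesis .
qed

lemma spd_symmetric: "spd H \<Longrightarrow> transpose H = H"
  and spd_pos: "spd H \<Longrightarrow> v \<noteq> 0 \<Longrightarrow> v \<bullet> (H *v v) > 0"
  unfolding spd_def by blast+

lemma spd_nonneg: "spd H \<Longrightarrow> v \<bullet> (H *v v) \<ge> 0"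
  using spd_pos[of H v] by (cases "v = 0") auto

lemma spd_invertible:
  assumes "spd H"
  shows "invertible H"
proof (rule invertible_if_kernel_trivial)
  fix v assume "H *v v = 0"
  then show "v = 0"
    using spd_pos[OF assms, of v] by fastforce
qed

lemma spd_matrix_inv:
  fixes H :: "real^'n^'n"
  assumes "spd H"
  shows "spd (matrix_inv H)"
  unfolding spd_def
proof (intro conjI allI impI)
  show "transpose (matrix_inv H) = matrix_inv H"
    using assms by (simp add: spd_symmetric spd_invertible symmetric_matrix_inv)
  fix v :: "real^'n" assume "v \<noteq> 0"
  define w where "w = matrix_inv H *v v"
  have Hw: "H *v w = v"
    by (simp add: w_def matrix_vector_mul_assoc matrix_inv_right spd_invertible assms)
  with \<open>v \<noteq> 0\<close> have "w \<noteq> 0" by auto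
  then have "w \<bullet> (H *v w) > 0" by (rule spd_pos[OF assms])
  then show "v \<bullet> (matrix_inv H *v v) > 0"
    by (simp add: Hw inner_commute flip: w_def)
qed

lemma spd_congruence:
  fixes A :: "real^'n^'n" and Z :: "real^'r^'n"
  assumes "spd A" "inj ((*v) Z)"
  shows "spd (transpose Z ** A ** Z)"
  unfolding spd_def
proof (intro conjI allI impI)
  show "transpose (transpose Z ** A ** Z) = transpose Z ** A ** Z"
    using spd_symmetric[OF assms(1)] by (simp add: matrix_transpose_mul matrix_mul_assoc)
  fix c :: "real^'r" assume "c \<noteq> 0"
  then have "Z *v c \<noteq> 0"
    using assms(2) by (metis injD matrix_vector_mult_0_right)
  then have "(Z *v c) \<bullet> (A *v (Z *v c)) > 0" by (rule spd_pos[OF assms(1)])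
  also have "(Z *v c) \<bullet> (A *v (Z *v c)) = c \<bullet> ((transpose Z ** A ** Z) *v c)"
    by (simp only: inner_matrix_vector_transpose matrix_vector_mul_assoc matrix_mul_assoc)
  finally show "c \<bullet> ((transpose Z ** A ** Z) *v c) > 0" .
qed

lemma quadratic_form_add_scaled:
  fixes B :: "real^'n^'n"
  assumes "transpose B = B"
  shows "(x + t *\<^sub>R y) \<bullet> (B *v (x + t *\<^sub>R y))
       = x \<bullet> (B *v x) + 2 * t * (y \<bullet> (B *v x)) + t\<^sup>2 * (y \<bullet> (B *v y))"
proof -
  have swap: "x \<bullet> (B *v y) = y \<bullet> (B *v x)"
    using inner_matrix_symmetric[OF assms, of x y] by (simp add: inner_commute)
  show ?thesis
    by (simp add: matrix_vector_right_distrib matrix_vector_mult_scaleR inner_add_left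
        inner_add_right swap power2_eq_square algebra_simps)
qed

lemma quadratic_form_scaleR:
  fixes B :: "real^'n^'n"
  shows "(c *\<^sub>R x) \<bullet> (B *v (c *\<^sub>R x)) = c\<^sup>2 * (x \<bullet> (B *v x))"
  by (simp add: matrix_vector_mult_scaleR power2_eq_square)

section \<open>Generalized eigenvectors from the Rayleigh quotient\<close>

lemma quadratic_form_nonpos_stationary:
  fixes Q :: "real^'n^'n"
  assumes Q: "transpose Q = Q" and V: "subspace V"
    and nonpos: "\<And>v. v \<in> V \<Longrightarrow> v \<bullet> (Q *v v) \<le> 0"
    and w: "w \<in> V" "w \<bullet> (Q *v w) = 0" and v: "v \<in> V"
  shows "v \<bullet> (Q *v w) = 0"
proof -
  define a where "a = v \<bullet> (Q *v w)"
  define c where "c = v \<bullet> (Q *v v)"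
  have c: "c \<le> 0" unfolding c_def using nonpos[OF v] .
  have along_line: "2 * t * a + t\<^sup>2 * c \<le> 0" for t
  proof -
    have "w + t *\<^sub>R v \<in> V" using V v w by (simp add: subspace_add subspace_scale)
    then have "(w + t *\<^sub>R v) \<bullet> (Q *v (w + t *\<^sub>R v)) \<le> 0" by (rule nonpos)
    then show ?thesis
      by (simp only: quadratic_form_add_scaled[OF Q]) (simp add: a_def c_def w)
  qed
  define d where "d = 1 - c"
  have d: "d > 0" using c by (simp add: d_def)
  have "a\<^sup>2 * (1 + d) / d\<^sup>2 = 2 * (a / d) * a + (a / d)\<^sup>2 * (1 - d)"
    using d by (simp add: field_simps power2_eq_square)
  also have "\<dots> = 2 * (a / d) * a + (a / d)\<^sup>2 * c" by (simp add: d_def)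
  also have "\<dots> \<le> 0" by (rule along_line)
  finally have "a\<^sup>2 * (1 + d) \<le> 0" using d by (simp add: divide_le_0_iff)
  then have "a\<^sup>2 \<le> 0" using d by (simp add: mult_le_0_iff)
  then show ?thesis unfolding a_def by simp
qed

lemma rayleigh_quotient_attains_max:
  fixes H M :: "real^'n^'n"
  assumes H: "spd H" and V: "subspace V" "V \<noteq> {0}"
  obtains w where "w \<in> V" "w \<bullet> (H *v w) = 1"
    "\<And>v. v \<in> V \<Longrightarrow> v \<bullet> (M *v v) \<le> (w \<bullet> (M *v w)) * (v \<bullet> (H *v v))"
proof -
  define S where "S = V \<inter> sphere 0 1"
  define f where "f v = (v \<bullet> (M *v v)) / (v \<bullet> (H *v v))" for v
  have f_scale: "f (c *\<^sub>R v) = f v" if "c \<noteq> 0" for c v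
    using that unfolding f_def quadratic_form_scaleR by simp
  have normalize: "(1 / norm v) *\<^sub>R v \<in> S" if "v \<in> V" "v \<noteq> 0" for v
    using that V(1) by (simp add: S_def subspace_scale)
  have "compact S"
    unfolding S_def using closed_subspace[OF V(1)] by (intro closed_Int_compact compact_sphere)
  moreover obtain z where "z \<in> V" "z \<noteq> 0" using V subspace_0 by blast
  then have "S \<noteq> {}" using normalize by blast
  moreover have "continuous_on S f"
  proof -
    have "v \<bullet> (H *v v) \<noteq> 0" if "v \<in> S" for v
    proof -
      have "v \<noteq> 0" using that by (auto simp: S_def)
      then show ?thesis using spd_pos[OF H, of v] by simp
    qed
    moreover have "continuous_on S (\<lambda>v. v \<bullet> (B *v v))" for B :: "real^'n^'n"
      by (intro continuous_on_inner continuous_on_id matrix_vector_mult_linear_continuous_on)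
    ultimately show ?thesis
      unfolding f_def by (intro continuous_on_divide) auto
  qed
  ultimately have "\<exists>w0\<in>S. \<forall>y\<in>S. f y \<le> f w0" by (rule continuous_attains_sup)
  then obtain w0 where w0: "w0 \<in> S" and max: "\<And>y. y \<in> S \<Longrightarrow> f y \<le> f w0" by blast
  have "w0 \<noteq> 0" using w0 by (auto simp: S_def)
  then have pos: "w0 \<bullet> (H *v w0) > 0" by (rule spd_pos[OF H])
  define w where "w = (1 / sqrt (w0 \<bullet> (H *v w0))) *\<^sub>R w0"
  show thesis
  proof
    show "w \<in> V" using w0 V(1) by (simp add: w_def S_def subspace_scale)
    show Hw: "w \<bullet> (H *v w) = 1"
      unfolding w_def quadratic_form_scaleR using pos by (simp add: power_divide)
    fix v assume "v \<in> V"
    show "v \<bullet> (M *v v) \<le> (w \<bullet> (M *v w)) * (v \<bullet> (H *v v))"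
    proof (cases "v = 0")
      case False
      have "f v = f ((1 / norm v) *\<^sub>R v)" using False by (simp add: f_scale)
      also have "\<dots> \<le> f w0" by (intro max normalize \<open>v \<in> V\<close> False)
      also have "\<dots> = f w" using pos by (simp add: w_def f_scale)
      also have "\<dots> = w \<bullet> (M *v w)" by (simp add: f_def Hw)
      finally show ?thesis
        using spd_pos[OF H False] by (simp add: f_def divide_le_eq)
    qed simp
  qed
qed

lemma orthogonal_to_H_complement_eq_0:
  fixes H :: "real^'n^'n" and u :: "'i \<Rightarrow> real^'n"
  assumes "finite I"
    and orth: "\<forall>i\<in>I. \<forall>j\<in>I. u i \<bullet> (H *v u j) = (if i = j then 1 else 0)"
    and perp: "\<And>v. \<forall>i\<in>I. u i \<bullet> (H *v v) = 0 \<Longrightarrow> v \<bullet> g = 0"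
    and g: "\<forall>i\<in>I. g \<bullet> u i = 0"
  shows "g = 0"
proof -
  define y where "y = g - (\<Sum>i\<in>I. (u i \<bullet> (H *v g)) *\<^sub>R u i)"
  have "u j \<bullet> (H *v y) = 0" if "j \<in> I" for j
  proof -
    have "u j \<bullet> (H *v y) = u j \<bullet> (H *v g) - (\<Sum>i\<in>I. (u i \<bullet> (H *v g)) * (u j \<bullet> (H *v u i)))"
      by (simp add: y_def matrix_vector_mult_diff_distrib inner_diff_right vec.sum
          inner_sum_right matrix_vector_mult_scaleR)
    also have "(\<Sum>i\<in>I. (u i \<bullet> (H *v g)) * (u j \<bullet> (H *v u i)))
        = (\<Sum>i\<in>I. if i = j then u i \<bullet> (H *v g) else 0)"
      by (rule sum.cong) (use orth that in auto)
    also have "\<dots> = u j \<bullet> (H *v g)" using that \<open>finite I\<close> by simp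
    finally show ?thesis by simp
  qed
  then have "y \<bullet> g = 0" by (intro perp) blast
  moreover have "g \<bullet> y = g \<bullet> g"
    using g by (simp add: y_def inner_diff_right inner_sum_right)
  ultimately show ?thesis by (simp add: inner_commute)
qed

lemma exists_nonzero_H_orthogonal:
  fixes H :: "real^'n^'n" and u :: "'i \<Rightarrow> real^'n"
  assumes H: "transpose H = H" and I: "finite I" "card I < CARD('n)"
  obtains z where "z \<noteq> 0" "\<forall>i\<in>I. u i \<bullet> (H *v z) = 0"
proof -
  have "dim ((\<lambda>i. H *v u i) ` I) \<le> card ((\<lambda>i. H *v u i) ` I)"
    using I(1) by (simp add: dim_le_card')
  also have "\<dots> \<le> card I" using I(1) by (rule card_image_le)
  finally have "dim ((\<lambda>i. H *v u i) ` I) < DIM(real^'n)" using I(2) by simp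
  then obtain z where "z \<noteq> 0"
    and z_orth: "\<And>y. y \<in> span ((\<lambda>i. H *v u i) ` I) \<Longrightarrow> orthogonal z y"
    using orthogonal_to_subspace_exists by blast
  moreover have "u i \<bullet> (H *v z) = 0" if "i \<in> I" for i
  proof -
    have "orthogonal z (H *v u i)" using that by (intro z_orth span_base) auto
    moreover have "u i \<bullet> (H *v z) = (H *v u i) \<bullet> z" by (rule inner_matrix_symmetric[OF H])
    ultimately show ?thesis by (simp add: orthogonal_def inner_commute)
  qed
  ultimately show thesis using that by blast
qed

(* A maximiser w of the Rayleigh quotient on the H-orthogonal complement V of the u i is
   stationary: Q = M - m H is nonpositive on V and vanishes at w, so Q w is orthogonal to V;
   it is also orthogonal to every u i, hence zero. *)
lemma generalized_eigenvector_extend: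
  fixes H M :: "real^'n^'n" and u :: "'i \<Rightarrow> real^'n"
  assumes H: "spd H" and M: "transpose M = M" and I: "finite I" "card I < CARD('n)"
    and orth: "\<forall>i\<in>I. \<forall>j\<in>I. u i \<bullet> (H *v u j) = (if i = j then 1 else 0)"
    and eig: "\<forall>i\<in>I. M *v u i = \<mu> i *\<^sub>R (H *v u i)"
  obtains w m where "\<forall>i\<in>I. u i \<bullet> (H *v w) = 0" "w \<bullet> (H *v w) = 1"
    "M *v w = m *\<^sub>R (H *v w)"
proof -
  have Hs: "transpose H = H" using H by (rule spd_symmetric)
  define V where "V = {v. \<forall>i\<in>I. u i \<bullet> (H *v v) = 0}"
  have V: "subspace V"
    unfolding V_def by (auto simp: subspace_def inner_add_right matrix_vector_right_distrib
        matrix_vector_mult_scaleR)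
  obtain z where "z \<noteq> 0" "z \<in> V"
    using exists_nonzero_H_orthogonal[OF Hs I] unfolding V_def by blast
  then have "V \<noteq> {0}" by blast
  then obtain w where w: "w \<in> V" "w \<bullet> (H *v w) = 1"
    and max: "\<And>v. v \<in> V \<Longrightarrow> v \<bullet> (M *v v) \<le> (w \<bullet> (M *v w)) * (v \<bullet> (H *v v))"
    using rayleigh_quotient_attains_max[OF H V] by blast
  define m where "m = w \<bullet> (M *v w)"
  define Q where "Q = M - m *\<^sub>R H"
  have Qv: "Q *v v = M *v v - m *\<^sub>R (H *v v)" for v
    by (simp add: Q_def matrix_vector_mult_diff_rdistrib flip: scaleR_matrix_vector_assoc)
  have "v \<bullet> (Q *v w) = 0" if "v \<in> V" for v
  proof (rule quadratic_form_nonpos_stationary[OF _ V _ w(1) _ that])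
    show "transpose Q = Q" by (simp add: Q_def transpose_diff transpose_scalar M Hs)
    show "v \<bullet> (Q *v v) \<le> 0" if "v \<in> V" for v
      using max[OF that] by (simp add: Qv inner_diff_right m_def)
    show "w \<bullet> (Q *v w) = 0" by (simp add: Qv inner_diff_right m_def w(2))
  qed
  moreover have "(Q *v w) \<bullet> u i = 0" if "i \<in> I" for i
  proof -
    have Hw: "(H *v w) \<bullet> u i = 0" using w(1) that by (simp add: V_def inner_commute)
    have "(M *v w) \<bullet> u i = w \<bullet> (M *v u i)" by (rule inner_matrix_symmetric[OF M, symmetric])
    also have "\<dots> = \<mu> i * (w \<bullet> (H *v u i))" using eig that by simp
    also have "w \<bullet> (H *v u i) = (H *v w) \<bullet> u i" by (rule inner_matrix_symmetric[OF Hs])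
    finally show ?thesis by (simp add: Qv inner_diff_left Hw)
  qed
  ultimately have "Q *v w = 0"
    using orthogonal_to_H_complement_eq_0[OF I(1) orth] by (simp add: V_def)
  then show thesis
    using that w by (simp add: V_def Qv)
qed

lemma generalized_eigenbasis_exists:
  fixes H M :: "real^'n^'n"
  assumes H: "spd H" and M: "transpose M = M"
  obtains u :: "'n \<Rightarrow> real^'n" and \<mu>
  where "\<And>i j. u i \<bullet> (H *v u j) = (if i = j then 1 else 0)"
    and "\<And>i. M *v u i = \<mu> i *\<^sub>R (H *v u i)"
proof -
  have "\<exists>u \<mu>. (\<forall>i\<in>I. \<forall>j\<in>I. u i \<bullet> (H *v u j) = (if i = j then 1 else 0)) \<and>
      (\<forall>i\<in>I. M *v u i = \<mu> i *\<^sub>R (H *v u i))" for I :: "'n set"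
    using finite[of I]
  proof (induction rule: finite_induct)
    case (insert a I)
    then obtain u \<mu> where orth: "\<forall>i\<in>I. \<forall>j\<in>I. u i \<bullet> (H *v u j) = (if i = j then 1 else 0)"
      and eig: "\<forall>i\<in>I. M *v u i = \<mu> i *\<^sub>R (H *v u i)"
      by blast
    have "card (insert a I) \<le> CARD('n)" by (rule card_mono) auto
    then have "card I < CARD('n)" using insert.hyps by simp
    then obtain w m where w: "\<forall>i\<in>I. u i \<bullet> (H *v w) = 0" "w \<bullet> (H *v w) = 1"
      "M *v w = m *\<^sub>R (H *v w)"
      using generalized_eigenvector_extend[OF H M insert.hyps(1) _ orth eig] by blast
    moreover have "\<forall>i\<in>I. w \<bullet> (H *v u i) = 0"
      using w(1) inner_matrix_symmetric[OF spd_symmetric[OF H], of _ w]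
      by (simp add: inner_commute)
    ultimately show ?case
      using orth eig insert.hyps(2)
      by (intro exI[of _ "u(a := w)"] exI[of _ "\<mu>(a := m)"]) auto
  qed simp
  from this[of UNIV] show thesis using that by auto
qed

section \<open>Characteristic polynomials and sorted eigenvalues\<close>

lemma poly_charpoly: "poly (charpoly X) t = det (mat t - X)"
proof -
  have entry: "poly (if i = j then [:0, 1:] else 0) t = (if i = j then t else 0)" for i j :: 'n
    by simp
  show ?thesis
    unfolding charpoly_def det_def
    by (simp only: poly_sum poly_prod poly_mult poly_diff entry poly_of_int vec_lambda_beta
        mat_def vector_minus_component) simp
qed

lemma charpoly_eq_prod_linear_factors:
  fixes X :: "real^'n^'n" and \<mu> :: "'n \<Rightarrow> real"
  assumes "\<And>t. det (mat t - X) = (\<Prod>i\<in>UNIV. t - \<mu> i)"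
  shows "charpoly X = (\<Prod>i\<in>UNIV. [:- \<mu> i, 1:])"
  by (rule poly_ext) (simp add: poly_charpoly assms poly_prod)

lemma order_prod_linear_factors:
  "order a (\<Prod>l\<leftarrow>xs. [:- l, 1:]) = count (mset xs) (a::'a::idom)"
proof (induction xs)
  case (Cons x xs)
  have "(\<Prod>l\<leftarrow>xs. [:- l, 1:]) \<noteq> 0"
    by (auto simp: prod_list_zero_iff)
  then have "[:- x, 1:] * (\<Prod>l\<leftarrow>xs. [:- l, 1:]) \<noteq> 0"
    by (intro no_zero_divisors) simp_all
  then have "order a (\<Prod>l\<leftarrow>x # xs. [:- l, 1:])
      = order a [:- x, 1:] + order a (\<Prod>l\<leftarrow>xs. [:- l, 1:])"
    unfolding list.map prod_list.Cons by (rule order_mult)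
  also have "order a [:- x, 1:] = (if a = x then 1 else 0)"
    using order_power_n_n[of a 1] by (auto simp: order_0I)
  finally show ?case using Cons.IH by simp
qed simp

lemma length_sorted_list_of_multiset [simp]: "length (sorted_list_of_multiset A) = size A"
  by (metis mset_sorted_list_of_multiset size_mset)

lemma sorted_eigs_eqI:
  fixes X :: "real^'n^'n"
  assumes "sorted ls" "length ls = CARD('n)" "charpoly X = (\<Prod>l\<leftarrow>ls. [:- l, 1:])"
  shows "sorted_eigs X = ls"
  unfolding sorted_eigs_def
proof (rule the_equality)
  fix ys assume ys: "sorted ys \<and> length ys = CARD('n) \<and> charpoly X = (\<Prod>l\<leftarrow>ys. [:- l, 1:])"
  have "count (mset ys) a = count (mset ls) a" for a
    using ys assms(3) order_prod_linear_factors by metis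
  then have "mset ys = mset ls" by (rule multiset_eqI)
  then show "ys = ls"
    using ys assms(1) properties_for_sort sorted_sort_id by metis
qed (use assms in blast)

lemma sorted_eigs_of_prod_linear_factors:
  fixes X :: "real^'n^'n" and \<mu> :: "'n \<Rightarrow> real"
  assumes "charpoly X = (\<Prod>i\<in>UNIV. [:- \<mu> i, 1:])"
  shows "sorted_eigs X = sorted_list_of_multiset (image_mset \<mu> (mset_set UNIV))"
proof (rule sorted_eigs_eqI)
  let ?ls = "sorted_list_of_multiset (image_mset \<mu> (mset_set (UNIV :: 'n set)))"
  show "sorted ?ls" by simp
  show "length ?ls = CARD('n)" by simp
  have "(\<Prod>l\<leftarrow>?ls. [:- l, 1:]) = prod_mset (image_mset (\<lambda>l. [:- l, 1:]) (mset ?ls))"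
    by (simp only: prod_mset_prod_list[symmetric] mset_map)
  also have "\<dots> = (\<Prod>i\<in>UNIV. [:- \<mu> i, 1:])"
    by (simp add: multiset.map_comp o_def prod_unfold_prod_mset)
  finally show "charpoly X = (\<Prod>l\<leftarrow>?ls. [:- l, 1:])" using assms by simp
qed

lemma sorted_nonneg_nth_count_zero:
  fixes xs :: "'a::{linorder, zero} list"
  assumes sorted: "sorted xs" and nonneg: "\<forall>x\<in>set xs. 0 \<le> x"
    and count: "count (mset xs) 0 = r" and r: "r < length xs"
  shows "0 < xs ! r" and "\<And>x. x \<in> set xs \<Longrightarrow> x \<noteq> 0 \<Longrightarrow> xs ! r \<le> x"
proof -
  define Z where "Z = {i. i < length xs \<and> 0 = xs ! i}"
  have card_Z: "card Z = r"
    using count unfolding Z_def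
    by (simp only: count_mset count_list_eq_length_filter length_filter_conv_card)
  have down: "i \<in> Z" if "i \<le> j" "j \<in> Z" for i j
  proof -
    have "xs ! i \<le> xs ! j" using that sorted_nth_mono[OF sorted, of i j] by (simp add: Z_def)
    moreover have "0 \<le> xs ! i" using that nonneg by (auto simp: Z_def)
    ultimately show ?thesis using that by (auto simp: Z_def)
  qed
  show "0 < xs ! r"
  proof (rule ccontr)
    assume "\<not> 0 < xs ! r"
    then have "r \<in> Z" using nonneg r by (auto simp: Z_def not_less intro: order.antisym)
    then have "{..r} \<subseteq> Z" using down by auto
    from card_mono[OF _ this] card_Z show False by (simp add: Z_def)
  qed
  fix x assume "x \<in> set xs" "x \<noteq> 0"
  then obtain k where k: "k < length xs" "xs ! k = x" by (auto simp: in_set_conv_nth)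
  have "r \<le> k"
  proof (rule ccontr)
    assume "\<not> r \<le> k"
    have "Z \<subseteq> {..<k}"
    proof
      fix j assume "j \<in> Z"
      show "j \<in> {..<k}"
      proof (rule ccontr)
        assume "j \<notin> {..<k}"
        then have "k \<in> Z" using down[OF _ \<open>j \<in> Z\<close>] by simp
        then show False using k \<open>x \<noteq> 0\<close> by (simp add: Z_def)
      qed
    qed
    from card_mono[OF _ this] card_Z \<open>\<not> r \<le> k\<close> show False by simp
  qed
  then show "xs ! r \<le> x" using sorted k by (auto intro: sorted_nth_mono)
qed

lemma sorted_le_last:
  assumes "sorted xs" "x \<in> set xs"
  shows "x \<le> last xs"
proof -
  obtain k where k: "k < length xs" "xs ! k = x" using assms(2) by (auto simp: in_set_conv_nth)
  then have "xs ! k \<le> xs ! (length xs - 1)" by (intro sorted_nth_mono[OF assms(1)]) auto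
  moreover have "xs \<noteq> []" using assms(2) by auto
  ultimately show ?thesis using k by (simp add: last_conv_nth)
qed

section \<open>Simultaneous diagonalisation\<close>

definition diag_mat :: "('n \<Rightarrow> real) \<Rightarrow> real^'n^'n" where
  "diag_mat \<mu> = (\<chi> i j. if i = j then \<mu> i else 0)"

lemma diag_mat_mult_vector: "(diag_mat \<mu> *v x) $ i = \<mu> i * x $ i"
  by (simp add: diag_mat_def matrix_vector_mult_def if_distrib[where f="\<lambda>a. a * _"] cong: if_cong)

lemma matrix_mul_diag_mat: "(A ** diag_mat \<mu>) $ i $ j = A $ i $ j * \<mu> j"
  by (simp add: diag_mat_def matrix_matrix_mult_def if_distrib[where f="\<lambda>a. _ * a"] cong: if_cong)

lemma det_mat_minus_diag_mat: "det (mat t - diag_mat \<mu>) = (\<Prod>i\<in>UNIV. t - \<mu> i)"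
  by (subst det_diagonal) (auto simp: mat_def diag_mat_def)

locale generalized_eigendecomposition =
  fixes H M U :: "real^'n^'n" and \<mu> :: "'n \<Rightarrow> real"
  assumes spd_H: "spd H"
    and congruent: "transpose U ** H ** U = mat 1"
    and eigen: "M ** U = H ** U ** diag_mat \<mu>"
begin

lemma invertible_U: "invertible U"
  using congruent invertible_left_inverse by blast

lemma congruent_mult: "transpose U *v (H *v (U *v y)) = y"
  by (simp add: matrix_vector_mul_assoc matrix_mul_assoc congruent)

lemma M_mult_U: "M *v (U *v c) = H *v (U *v (diag_mat \<mu> *v c))"
  by (simp add: matrix_vector_mul_assoc matrix_mul_assoc eigen)

lemma inv_H_M_U: "matrix_inv H ** M ** U = U ** diag_mat \<mu>"
proof -
  have "matrix_inv H ** M ** U = matrix_inv H ** (M ** U)"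
    by (rule matrix_mul_assoc[symmetric])
  also have "\<dots> = matrix_inv H ** H ** U ** diag_mat \<mu>"
    by (simp add: eigen matrix_mul_assoc)
  also have "\<dots> = U ** diag_mat \<mu>"
    by (simp add: matrix_inv_left[OF spd_invertible[OF spd_H]])
  finally show ?thesis .
qed

lemma det_eq: "det (mat t - matrix_inv H ** M) = (\<Prod>i\<in>UNIV. t - \<mu> i)"
proof -
  have mat_t: "mat t = t *\<^sub>R (mat 1 :: real^'n^'n)"
    by (simp add: vec_eq_iff mat_def)
  have "(mat t - matrix_inv H ** M) ** U = mat t ** U - matrix_inv H ** M ** U"
    by (rule matrix_mul_diff_right)
  also have "\<dots> = U ** mat t - U ** diag_mat \<mu>"
    by (simp add: inv_H_M_U mat_t matrix_scalar_ac flip: scalar_matrix_assoc)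
  also have "\<dots> = U ** (mat t - diag_mat \<mu>)"
    by (rule matrix_mul_diff_left[symmetric])
  finally have "det (mat t - matrix_inv H ** M) * det U = det U * (\<Prod>i\<in>UNIV. t - \<mu> i)"
    by (metis det_mul det_mat_minus_diag_mat)
  moreover have "det U \<noteq> 0"
    using invertible_U by (simp add: invertible_det_nz)
  ultimately show ?thesis by simp
qed

lemma sorted_eigs_eq:
  "sorted_eigs (matrix_inv H ** M) = sorted_list_of_multiset (image_mset \<mu> (mset_set UNIV))"
  by (intro sorted_eigs_of_prod_linear_factors charpoly_eq_prod_linear_factors det_eq)

lemma quadratic_form_eq: "(U *v c) \<bullet> (M *v (U *v c)) = (\<Sum>i\<in>UNIV. \<mu> i * (c $ i)\<^sup>2)"
proof -
  have "(U *v c) \<bullet> (M *v (U *v c)) = c \<bullet> (transpose U *v (H *v (U *v (diag_mat \<mu> *v c))))"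
    by (simp only: M_mult_U inner_matrix_vector_transpose)
  also have "\<dots> = c \<bullet> (diag_mat \<mu> *v c)"
    by (simp only: congruent_mult)
  finally show ?thesis
    by (simp add: inner_vec_def diag_mat_mult_vector power2_eq_square algebra_simps)
qed

lemma inverse_form_eq:
  "(M *v (U *v c)) \<bullet> (matrix_inv H *v (M *v (U *v c))) = (\<Sum>i\<in>UNIV. (\<mu> i * c $ i)\<^sup>2)"
proof -
  define d where "d = diag_mat \<mu> *v c"
  have "matrix_inv H *v (M *v (U *v c)) = U *v d"
    by (simp add: d_def matrix_vector_mul_assoc matrix_mul_assoc inv_H_M_U)
  then have "(M *v (U *v c)) \<bullet> (matrix_inv H *v (M *v (U *v c))) = (H *v (U *v d)) \<bullet> (U *v d)"
    by (simp only: M_mult_U flip: d_def)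
  also have "\<dots> = (U *v d) \<bullet> (H *v (U *v d))"
    by (rule inner_commute)
  also have "\<dots> = d \<bullet> (transpose U *v (H *v (U *v d)))"
    by (rule inner_matrix_vector_transpose)
  also have "\<dots> = d \<bullet> d"
    by (simp only: congruent_mult)
  finally show ?thesis
    by (simp add: d_def inner_vec_def diag_mat_mult_vector power2_eq_square)
qed

lemma kernel_dim: "dim {v. M *v v = 0} = card {i. \<mu> i = 0}"
proof -
  define N where "N = {c :: real^'n. \<forall>i. i \<notin> {i. \<mu> i = 0} \<longrightarrow> c $ i = 0}"
  have M_U_zero: "M *v (U *v c) = 0 \<longleftrightarrow> c \<in> N" for c
  proof -
    have "M *v (U *v c) = 0 \<longleftrightarrow> diag_mat \<mu> *v c = 0"
    proof
      assume "M *v (U *v c) = 0"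
      then have "transpose U *v (H *v (U *v (diag_mat \<mu> *v c))) = 0"
        by (simp add: M_mult_U)
      then show "diag_mat \<mu> *v c = 0" by (simp only: congruent_mult)
    qed (simp add: M_mult_U)
    also have "\<dots> \<longleftrightarrow> c \<in> N" by (auto simp: N_def vec_eq_iff diag_mat_mult_vector)
    finally show ?thesis .
  qed
  have U_inj: "inj ((*v) U)"
    using invertible_U matrix_left_invertible_injective invertible_left_inverse by blast
  have "{v. M *v v = 0} = (*v) U ` N"
  proof (intro equalityI subsetI)
    fix v assume "v \<in> {v. M *v v = 0}"
    moreover have "v = U *v (matrix_inv U *v v)"
      by (simp add: matrix_vector_mul_assoc matrix_inv_right[OF invertible_U])
    ultimately show "v \<in> (*v) U ` N"
      using M_U_zero[of "matrix_inv U *v v"] by auto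
  next
    fix v assume "v \<in> (*v) U ` N"
    then show "v \<in> {v. M *v v = 0}" using M_U_zero by blast
  qed
  also have "dim \<dots> = dim N"
    by (rule dim_image_eq) (auto intro: inj_on_subset[OF U_inj])
  also have "\<dots> = card {i. \<mu> i = 0}"
    unfolding N_def dim_vec_eq[symmetric] by (rule dim_substandard_cart)
  finally show ?thesis .
qed

lemma sorted_eigs_set: "set (sorted_eigs (matrix_inv H ** M)) = range \<mu>"
  by (simp add: sorted_eigs_eq)

lemma sorted_eigs_length: "length (sorted_eigs (matrix_inv H ** M)) = CARD('n)"
  by (simp add: sorted_eigs_eq)

lemma eigenvalue_le_last: "\<mu> i \<le> last (sorted_eigs (matrix_inv H ** M))"
  by (rule sorted_le_last) (simp_all add: sorted_eigs_eq)

lemma eigenvalue_nonneg: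
  assumes "\<And>v. 0 \<le> v \<bullet> (M *v v)"
  shows "0 \<le> \<mu> i"
  using assms[of "U *v axis i 1"]
  by (simp add: quadratic_form_eq axis_def if_distrib[where f="\<lambda>a. _ * a\<^sup>2"] cong: if_cong)

lemma sorted_eigs_nth_kernel_dim:
  assumes psd: "\<And>v. 0 \<le> v \<bullet> (M *v v)"
    and ker: "dim {v. M *v v = 0} = r" and r: "r < CARD('n)"
  shows "0 < sorted_eigs (matrix_inv H ** M) ! r"
    and "\<mu> i \<noteq> 0 \<Longrightarrow> sorted_eigs (matrix_inv H ** M) ! r \<le> \<mu> i"
proof -
  let ?eigs = "sorted_eigs (matrix_inv H ** M)"
  have "count (mset ?eigs) 0 = r"
    using kernel_dim ker by (simp add: sorted_eigs_eq count_image_mset_eq_card_vimage vimage_def)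
  moreover have "\<forall>x\<in>set ?eigs. 0 \<le> x"
    using eigenvalue_nonneg[OF psd] by (auto simp: sorted_eigs_set)
  moreover have "sorted ?eigs" by (simp add: sorted_eigs_eq)
  ultimately show "0 < ?eigs ! r" "\<mu> i \<noteq> 0 \<Longrightarrow> ?eigs ! r \<le> \<mu> i"
    using sorted_nonneg_nth_count_zero[of ?eigs r] r
    by (auto simp: sorted_eigs_length sorted_eigs_set)
qed

end

lemma generalized_eigendecomposition_exists:
  fixes H M :: "real^'n^'n"
  assumes "spd H" "transpose M = M"
  obtains U \<mu> where "generalized_eigendecomposition H M U \<mu>"
proof -
  obtain u :: "'n \<Rightarrow> real^'n" and \<mu>
    where orth: "\<And>i j. u i \<bullet> (H *v u j) = (if i = j then 1 else 0)"
      and eig: "\<And>i. M *v u i = \<mu> i *\<^sub>R (H *v u i)"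
    using generalized_eigenbasis_exists[OF assms] by blast
  define U :: "real^'n^'n" where "U = (\<chi> i j. u j $ i)"
  have column: "(B ** U) $ i $ j = (B *v u j) $ i" for B :: "real^'n^'n" and i j
    by (simp add: U_def matrix_matrix_mult_def matrix_vector_mult_def)
  have "(transpose U ** (H ** U)) $ i $ j = u i \<bullet> (H *v u j)" for i j
    by (simp add: matrix_matrix_mult_def transpose_def U_def matrix_vector_mult_def inner_vec_def)
  then have "transpose U ** H ** U = mat 1"
    by (simp add: vec_eq_iff orth mat_def flip: matrix_mul_assoc)
  moreover have "M ** U = H ** U ** diag_mat \<mu>"
    by (simp add: vec_eq_iff column matrix_mul_diag_mat eig mult.commute)
  ultimately show thesis
    using that assms(1) by (simp add: generalized_eigendecomposition_def)
qed

section \<open>Bounds through the effective condition number\<close>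

theorem generalized_rayleigh_bounds:
  fixes H M :: "real^'n^'n"
  assumes H: "spd H" and M: "transpose M = M" and psd: "\<And>v. 0 \<le> v \<bullet> (M *v v)"
    and ker: "dim {v. M *v v = 0} = r" and r: "r < CARD('n)"
  defines "eigs \<equiv> sorted_eigs (matrix_inv H ** M)"
  shows "0 < eigs ! r"
    and "eigs ! r * (v \<bullet> (M *v v)) \<le> (M *v v) \<bullet> (matrix_inv H *v (M *v v))"
    and "(M *v v) \<bullet> (matrix_inv H *v (M *v v)) \<le> last eigs * (v \<bullet> (M *v v))"
proof -
  obtain U \<mu> where "generalized_eigendecomposition H M U \<mu>"
    using generalized_eigendecomposition_exists[OF H M] .
  then interpret generalized_eigendecomposition H M U \<mu> .
  note nonneg = eigenvalue_nonneg[OF psd] and gap = sorted_eigs_nth_kernel_dim[OF psd ker r]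
  show "0 < eigs ! r" unfolding eigs_def by (rule gap(1))
  have "v = U *v (matrix_inv U *v v)"
    by (simp add: matrix_vector_mul_assoc matrix_inv_right[OF invertible_U])
  then obtain c where v: "v = U *v c" by blast
  have "eigs ! r * (\<mu> i * (c $ i)\<^sup>2) \<le> \<mu> i * (\<mu> i * (c $ i)\<^sup>2)" for i
    using gap(2)[of i] nonneg[of i] unfolding eigs_def
    by (cases "\<mu> i = 0") (auto intro: mult_right_mono)
  then show "eigs ! r * (v \<bullet> (M *v v)) \<le> (M *v v) \<bullet> (matrix_inv H *v (M *v v))"
    unfolding v quadratic_form_eq inverse_form_eq sum_distrib_left
    by (intro sum_mono) (simp add: power2_eq_square algebra_simps)
  have "\<mu> i * (\<mu> i * (c $ i)\<^sup>2) \<le> last eigs * (\<mu> i * (c $ i)\<^sup>2)" for i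
    using eigenvalue_le_last[of i] nonneg[of i] unfolding eigs_def by (intro mult_right_mono) auto
  then show "(M *v v) \<bullet> (matrix_inv H *v (M *v v)) \<le> last eigs * (v \<bullet> (M *v v))"
    unfolding v quadratic_form_eq inverse_form_eq sum_distrib_left
    by (intro sum_mono) (simp add: power2_eq_square algebra_simps)
qed

theorem energy_error_le_kappa_eff_residual:
  fixes H M :: "real^'n^'n"
  assumes H: "spd H" and M: "transpose M = M" and psd: "\<And>v. 0 \<le> v \<bullet> (M *v v)"
    and ker: "dim {v. M *v v = 0} = r" and r: "r < CARD('n)" and Mx: "M *v x \<noteq> 0"
  shows "bnorm M e / bnorm M x
    \<le> sqrt (kappa_eff r (matrix_inv H ** M))
       * (bnorm (matrix_inv H) (M *v e) / bnorm (matrix_inv H) (M *v x))"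
proof -
  define lmin where "lmin = sorted_eigs (matrix_inv H ** M) ! r"
  define lmax where "lmax = last (sorted_eigs (matrix_inv H ** M))"
  define qe qx se sx where "qe = e \<bullet> (M *v e)" and "qx = x \<bullet> (M *v x)"
    and "se = (M *v e) \<bullet> (matrix_inv H *v (M *v e))"
    and "sx = (M *v x) \<bullet> (matrix_inv H *v (M *v x))"
  note bounds = generalized_rayleigh_bounds[OF H M psd ker r]
  have lmin: "0 < lmin" and e_bound: "lmin * qe \<le> se" and x_bound: "sx \<le> lmax * qx"
    using bounds unfolding lmin_def lmax_def qe_def qx_def se_def sx_def by blast+
  have "0 < sx"
    unfolding sx_def using spd_pos[OF spd_matrix_inv[OF H] Mx] .
  with x_bound have "0 < lmax * qx" by linarith
  moreover have "0 \<le> qx" unfolding qx_def by (rule psd)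
  ultimately have "0 < qx" "0 < lmax" by (auto simp: zero_less_mult_iff)
  have "0 \<le> qe" unfolding qe_def by (rule psd)
  then have "0 \<le> se" using e_bound lmin mult_nonneg_nonneg[of lmin qe] by linarith
  have "qe * lmin * sx \<le> se * sx" using e_bound \<open>0 < sx\<close> by (simp add: mult.commute)
  also have "\<dots> \<le> se * (lmax * qx)" using x_bound \<open>0 \<le> se\<close> by (rule mult_left_mono)
  finally have "qe / qx \<le> (lmax / lmin) * (se / sx)"
    using \<open>0 < qx\<close> lmin \<open>0 < sx\<close> by (simp add: field_simps)
  then have "sqrt qe / sqrt qx \<le> sqrt (lmax / lmin) * (sqrt se / sqrt sx)"
    by (simp flip: real_sqrt_mult real_sqrt_divide)
  then show ?thesis
    by (simp add: bnorm_def kappa_eff_def lmin_def lmax_def qe_def qx_def se_def sx_def)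
qed

section \<open>Deflation\<close>

locale deflation =
  fixes A :: "real^'n^'n" and Z :: "real^'r^'n"
  assumes spd_A: "spd A" and inj_Z: "inj ((*v) Z)"
begin

definition Q :: "real^'n^'n" where
  "Q = Z ** matrix_inv (transpose Z ** A ** Z) ** transpose Z"

definition P :: "real^'n^'n" where
  "P = mat 1 - A ** Q"

lemma invertible_E: "invertible (transpose Z ** A ** Z)"
  by (intro spd_invertible spd_congruence spd_A inj_Z)

lemma A_symmetric: "transpose A = A"
  using spd_A by (rule spd_symmetric)

lemma Q_symmetric: "transpose Q = Q"
  using spd_symmetric[OF spd_congruence[OF spd_A inj_Z]] invertible_E
  by (simp add: Q_def matrix_transpose_mul symmetric_matrix_inv matrix_mul_assoc)

lemma mult_Q_A_Z: "X ** Q ** A ** Z = X ** Z"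
proof -
  have "X ** Q ** A ** Z
      = X ** Z ** (matrix_inv (transpose Z ** A ** Z) ** (transpose Z ** A ** Z))"
    by (simp add: Q_def matrix_mul_assoc)
  then show ?thesis by (simp add: matrix_inv_left[OF invertible_E])
qed

lemma mult_Q_A_Q: "X ** Q ** A ** Q = X ** Q"
proof -
  have "X ** Q ** A ** Q = X ** Q ** A ** Z ** matrix_inv (transpose Z ** A ** Z) ** transpose Z"
    by (simp add: Q_def matrix_mul_assoc)
  also have "\<dots> = X ** Q"
    by (simp add: mult_Q_A_Z) (simp add: Q_def matrix_mul_assoc)
  finally show ?thesis .
qed

lemma PA_eq: "P ** A = A - A ** Q ** A"
  by (simp add: P_def matrix_mul_diff_right matrix_mul_assoc)

lemma transpose_P: "transpose P = mat 1 - Q ** A"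
  by (simp add: P_def transpose_diff matrix_transpose_mul A_symmetric Q_symmetric)

lemma PA_symmetric: "transpose (P ** A) = P ** A"
  by (simp add: PA_eq transpose_diff matrix_transpose_mul A_symmetric Q_symmetric matrix_mul_assoc)

lemma PA_mult_Q: "P ** A ** Q = 0"
  by (simp add: PA_eq matrix_mul_diff_right matrix_mul_assoc mult_Q_A_Q)

lemma PA_mult_transpose_P: "P ** A ** transpose P = P ** A"
  by (simp add: PA_eq transpose_P matrix_mul_diff_left matrix_mul_diff_right matrix_mul_assoc
      mult_Q_A_Q)

lemma A_mult_transpose_P: "A ** transpose P = P ** A"
  by (simp add: transpose_P PA_eq matrix_mul_diff_left matrix_mul_assoc)

lemma PA_nonneg: "0 \<le> v \<bullet> ((P ** A) *v v)"
proof -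
  have "(transpose P *v v) \<bullet> (A *v (transpose P *v v)) = v \<bullet> (P *v (A *v (transpose P *v v)))"
    by (simp only: inner_matrix_vector_transpose transpose_transpose)
  also have "\<dots> = v \<bullet> ((P ** A) *v v)"
    by (simp only: matrix_vector_mul_assoc matrix_mul_assoc PA_mult_transpose_P)
  finally show ?thesis using spd_nonneg[OF spd_A] by metis
qed

lemma PA_kernel: "{v. (P ** A) *v v = 0} = range ((*v) Z)"
proof (intro equalityI subsetI)
  fix v assume "v \<in> {v. (P ** A) *v v = 0}"
  then have "(A - A ** Q ** A) *v v = 0" by (simp add: PA_eq)
  then have "A *v v = (A ** Q ** A) *v v" by (simp add: matrix_vector_mult_diff_rdistrib)
  also have "\<dots> = A *v (Q *v (A *v v))" by (simp add: matrix_vector_mul_assoc matrix_mul_assoc)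
  finally have "A *v v = A *v (Q *v (A *v v))" .
  moreover have "inj ((*v) A)"
    using spd_invertible[OF spd_A] invertible_left_inverse matrix_left_invertible_injective
    by blast
  ultimately have "v = Q *v (A *v v)" by (simp add: inj_eq)
  also have "\<dots> = Z *v ((matrix_inv (transpose Z ** A ** Z) ** transpose Z ** A) *v v)"
    by (simp add: Q_def matrix_vector_mul_assoc matrix_mul_assoc)
  finally show "v \<in> range ((*v) Z)" by blast
next
  fix v assume "v \<in> range ((*v) Z)"
  then obtain c where "v = Z *v c" by blast
  moreover have "P ** A ** Z = 0"
    by (simp add: PA_eq matrix_mul_diff_right matrix_mul_assoc mult_Q_A_Z)
  ultimately show "v \<in> {v. (P ** A) *v v = 0}"
    by (simp add: matrix_vector_mul_assoc)
qed

lemma PA_mult_solution: "(P ** A) *v (matrix_inv A *v b) = P *v b"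
  by (simp add: matrix_vector_mul_assoc matrix_inv_right[OF spd_invertible[OF spd_A]]
      flip: matrix_mul_assoc)

lemma PA_mult_error:
  "(P ** A) *v (matrix_inv A *v b - (transpose P *v y + Q *v b))
    = b - A *v (transpose P *v y + Q *v b)"
proof -
  have "(P ** A) *v (transpose P *v y + Q *v b) = (P ** A) *v y"
    using PA_mult_transpose_P PA_mult_Q
    by (simp add: matrix_vector_right_distrib matrix_vector_mul_assoc del: transpose_matrix_vector)
  moreover have "A *v (transpose P *v y + Q *v b) = (P ** A) *v y + (A ** Q) *v b"
    using A_mult_transpose_P
    by (simp add: matrix_vector_right_distrib matrix_vector_mul_assoc del: transpose_matrix_vector)
  moreover have "P *v b = b - (A ** Q) *v b"
    by (simp add: P_def matrix_vector_mult_diff_rdistrib)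
  ultimately show ?thesis
    by (simp add: matrix_vector_mult_diff_distrib PA_mult_solution)
qed

end

theorem corollary1:
  fixes A H :: "real^'n^'n" and Z :: "real^'r^'n" and b xt :: "real^'n"
  assumes "spd A" and "spd H"
    and "CARD('r) < CARD('n)"
    and "rank Z = CARD('r)"
    and "P = mat 1 - A ** Z ** matrix_inv (transpose Z ** A ** Z) ** transpose Z"
    and "P *v b \<noteq> 0"
    and "x = matrix_inv A *v b"
    and "xj = transpose P *v xt + (Z ** matrix_inv (transpose Z ** A ** Z) ** transpose Z) *v b"
    and "rj = b - A *v xj"
  shows "bnorm (P ** A) (x - xj) / bnorm (P ** A) x
         \<le> sqrt (kappa_eff CARD('r) (matrix_inv H ** P ** A))
            * (bnorm (matrix_inv H) rj / bnorm (matrix_inv H) (P *v b))"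
proof -
  interpret deflation A Z
    using assms(1,4) full_rank_injective by unfold_locales blast+
  have P: "P = deflation.P A Z"
    using assms(5) by (simp add: P_def Q_def matrix_mul_assoc)
  have "dim {v. (P ** A) *v v = 0} = CARD('r)"
    using P PA_kernel assms(4) by (simp add: rank_dim_range)
  moreover have "(P ** A) *v x = P *v b"
    using P assms(7) by (simp add: PA_mult_solution)
  moreover have "(P ** A) *v (x - xj) = rj"
    using P assms(7-9) PA_mult_error by (simp add: Q_def)
  ultimately show ?thesis
    using energy_error_le_kappa_eff_residual[OF assms(2), of "P ** A" "CARD('r)" x "x - xj"]
      P PA_symmetric PA_nonneg assms(3,6) by (simp add: matrix_mul_assoc)
qed

end
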